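(* There exists a function $\mathrm{B}:2^{<\omega}\times 2^{<\omega}\to\mathbb{N}$ such that: (1) $\mathrm{B}(x|y)$ is upper semi-computable uniformly in $x,y$; (2) there is a constant $c$ such that $\mathrm{B}(x|y)\le |x|+c$ for all $x,y$; (3) there is a constant $d$, independent of $y$, such that $|\{x : \mathrm{B}(x|y)\le n\}|\le d\cdot 2^n$ for all $y$ and $n$; (4) for every partial computable function $f:2^{<\omega}\to 2^{<\omega}$ there is a constant $c_f$ such that $\mathrm{B}(f(x)|y)\le \mathrm{B}(x|y)+c_f$ for all $y$ and all $x$ in the domain of $f$; (5) there is a constant $e$ such that $\mathrm{B}(x|x)\le e$ for all $x$; (6) $|\mathrm{B}(x|y)-\mathrm{C}(x|y)|$ is unbounded over $x,y\in 2^{<\omega}$.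
   Context: $2^{<\omega}$ is the set of finite binary strings; $|x|$ is the length of $x$; $\langle\cdot,\cdot\rangle$ is a fixed computable pairing function on strings. For a machine $T$, $\mathrm{C}_T(x|y)=\min\{|z| : T(\langle z,y\rangle)=x\}$. Fix an optimal machine $\mathbb{U}$ (for every machine $T$ there is $c_T$ with $\mathrm{C}_{\mathbb{U}}(x|y)\le \mathrm{C}_T(x|y)+c_T$ for all $x,y$) and set $\mathrm{C}(x|y)=\mathrm{C}_{\mathbb{U}}(x|y)$. Upper semi-computable uniformly in $x,y$ means the predicate "$\mathrm{B}(x|y)\le k$" is computably enumerable uniformly in $x,y,k$. *)

theory Defs
  imports Main "HOL-Library.Nat_Bijection" "HOL-Library.Extended_Nat"
begin

datatype recf =
    Z
  | S
  | Fst
  | Snd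
  | Comp recf recf
  | Pair recf recf
  | Rec recf recf
  | Mu recf

inductive eval :: "recf \<Rightarrow> nat \<Rightarrow> nat \<Rightarrow> bool" where
  eval_Z: "eval Z n 0"
| eval_S: "eval S n (Suc n)"
| eval_Fst: "eval Fst n (fst (prod_decode n))"
| eval_Snd: "eval Snd n (snd (prod_decode n))"
| eval_Comp: "eval g n m \<Longrightarrow> eval f m k \<Longrightarrow> eval (Comp f g) n k"
| eval_Pair: "eval f n a \<Longrightarrow> eval g n b \<Longrightarrow> eval (Pair f g) n (prod_encode (a, b))"
| eval_Rec0: "eval f x v \<Longrightarrow> eval (Rec f g) (prod_encode (x, 0)) v"
| eval_RecS: "eval (Rec f g) (prod_encode (x, k)) u \<Longrightarrow>
      eval g (prod_encode (x, prod_encode (k, u))) v \<Longrightarrow>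
      eval (Rec f g) (prod_encode (x, Suc k)) v"
| eval_Mu: "eval f (prod_encode (n, m)) 0 \<Longrightarrow>
      (\<forall>i<m. \<exists>v. eval f (prod_encode (n, i)) v \<and> v \<noteq> 0) \<Longrightarrow>
      eval (Mu f) n m"

type_synonym str = "bool list"

text \<open>Bijective base-2 coding of finite binary strings.\<close>
fun enc :: "str \<Rightarrow> nat" where
  "enc [] = 0"
| "enc (b # x) = 2 * enc x + (if b then 2 else 1)"

function dec :: "nat \<Rightarrow> str" where
  "dec n = (if n = 0 then [] else if even n then True # dec ((n - 2) div 2)
            else False # dec ((n - 1) div 2))"
  by auto
termination by (relation "measure id") auto

definition str_pair :: "str \<Rightarrow> str \<Rightarrow> str" where
  "str_pair z y = dec (prod_encode (enc z, enc y))"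

definition partial_computable :: "(str \<Rightarrow> str option) \<Rightarrow> bool" where
  "partial_computable f \<longleftrightarrow>
     (\<exists>r. \<forall>x v. eval r (enc x) v \<longleftrightarrow> (\<exists>z. f x = Some z \<and> v = enc z))"

definition ce_set :: "nat set \<Rightarrow> bool" where
  "ce_set A \<longleftrightarrow> (\<exists>r. \<forall>n. n \<in> A \<longleftrightarrow> (\<exists>v. eval r n v))"

definition upper_semicomputable :: "(str \<Rightarrow> str \<Rightarrow> nat) \<Rightarrow> bool" where
  "upper_semicomputable B \<longleftrightarrow>
     ce_set {prod_encode (enc x, prod_encode (enc y, k)) | x y k. B x y \<le> k}"

definition Ccond :: "(str \<Rightarrow> str option) \<Rightarrow> str \<Rightarrow> str \<Rightarrow> enat" where
  "Ccond T x y = (INF z \<in> {z. T (str_pair z y) = Some x}. enat (length z))"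

definition optimal_machine :: "(str \<Rightarrow> str option) \<Rightarrow> bool" where
  "optimal_machine U \<longleftrightarrow> partial_computable U \<and>
     (\<forall>T. partial_computable T \<longrightarrow>
        (\<exists>c::nat. \<forall>x y. Ccond U x y \<le> Ccond T x y + enat c))"

end

theory Submission
  imports Defs
begin

text \<open>Take \<open>B(x|y) = min (C(x|\<epsilon>)) (2 C(x|y))\<close>. The bound by \<open>|x|\<close>, the invariance under
  computable maps and the bound on \<open>B(x|x)\<close> are inherited from \<open>C\<close>. Since
  \<open>C(x|y) \<le> C(x|\<epsilon>) + O(1)\<close>, \<open>B(x|y) \<le> n\<close> forces \<open>C(x|y) \<le> n + O(1)\<close>, which gives the
  counting bound. Upper semicomputability comes from writing \<open>C(x|y) \<le> k\<close> as an existential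
  over a decidable relation, using evaluation with a time budget. Finally, along the suffixes
  \<open>y\<close> of an incompressible \<open>x\<close> the value \<open>C(x|y)\<close> moves in bounded steps from \<open>O(1)\<close> to
  \<open>C(x|\<epsilon>)\<close>, so some suffix makes \<open>C(x|y)\<close> large but far below \<open>C(x|\<epsilon>)\<close>; there \<open>B = 2C\<close>.\<close>

section \<open>Binary strings\<close>

declare dec.simps [simp del]

lemma dec_0 [simp]: "dec 0 = []"
  by (subst dec.simps) simp

lemma dec_pos:
  "0 < n \<Longrightarrow> dec n = (if even n then True # dec ((n - 1) div 2) else False # dec ((n - 1) div 2))"
proof -
  assume "0 < n"
  moreover have "even n \<Longrightarrow> (n - 2) div 2 = (n - 1) div 2" by presburger
  ultimately show ?thesis by (subst dec.simps) auto
qed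

lemma enc_dec [simp]: "enc (dec n) = n"
proof (induction n rule: less_induct)
  case (less n)
  show ?case
  proof (cases "n = 0")
    case False
    then have "(n - 1) div 2 < n" by simp
    with False less show ?thesis by (simp add: dec_pos) presburger
  qed simp
qed

lemma inj_enc: "inj enc"
proof (rule injI)
  show "enc x = enc y \<Longrightarrow> x = y" for x y
  proof (induction x arbitrary: y)
    case Nil then show ?case by (cases y) (auto split: if_splits)
  next
    case (Cons a x)
    then show ?case by (cases y) (auto split: if_splits, presburger+)
  qed
qed

lemma enc_eq_iff [simp]: "enc x = enc y \<longleftrightarrow> x = y"
  using inj_enc by (rule inj_eq)

lemma dec_enc [simp]: "dec (enc x) = x"
  using enc_dec enc_eq_iff by blast

lemma enc_str_pair [simp]: "enc (str_pair z y) = prod_encode (enc z, enc y)"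
  by (simp add: str_pair_def)

lemma enc_length_bounds: "2 ^ length z \<le> enc z + 1" "enc z + 2 \<le> 2 ^ (length z + 1)"
  by (induction z) auto

lemma length_le_iff_enc: "length z \<le> j \<longleftrightarrow> enc z + 2 \<le> 2 ^ (j + 1)"
proof
  assume "length z \<le> j"
  then have "(2::nat) ^ (length z + 1) \<le> 2 ^ (j + 1)" by (intro power_increasing) auto
  with enc_length_bounds(2)[of z] show "enc z + 2 \<le> 2 ^ (j + 1)" by linarith
next
  assume "enc z + 2 \<le> 2 ^ (j + 1)"
  with enc_length_bounds(1)[of z] have "(2::nat) ^ length z < 2 ^ (j + 1)" by linarith
  then show "length z \<le> j" using power_strict_increasing_iff[of "2::nat" "length z" "j + 1"] by simp
qed

lemma strings_length_le_subset: "{z. length z \<le> L} \<subseteq> dec ` {..<2 ^ (L + 1)}"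
proof
  fix z :: str
  assume "z \<in> {z. length z \<le> L}"
  then have "enc z < 2 ^ (L + 1)" using length_le_iff_enc by auto
  then show "z \<in> dec ` {..<2 ^ (L + 1)}" by (metis dec_enc image_eqI lessThan_iff)
qed

lemma finite_strings_length_le: "finite {z :: str. length z \<le> L}"
  using strings_length_le_subset by (rule finite_subset) simp

lemma card_strings_length_le: "card {z :: str. length z \<le> L} \<le> 2 ^ (L + 1)"
proof -
  have "card {z :: str. length z \<le> L} \<le> card (dec ` {..<2 ^ (L + 1)})"
    by (intro card_mono strings_length_le_subset) simp
  also have "\<dots> \<le> 2 ^ (L + 1)"
    by (metis card_image_le card_lessThan finite_lessThan)
  finally show ?thesis .
qed

section \<open>Partial and total recursive functions\<close>

inductive_cases eval_ZE: "eval Z n v"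
inductive_cases eval_SE: "eval S n v"
inductive_cases eval_FstE: "eval Fst n v"
inductive_cases eval_SndE: "eval Snd n v"
inductive_cases eval_CompE: "eval (Comp f g) n v"
inductive_cases eval_PairE: "eval (recf.Pair f g) n v"
inductive_cases eval_RecE: "eval (Rec f g) n v"
inductive_cases eval_MuE: "eval (Mu f) n v"

lemma eval_deterministic: "eval f n v \<Longrightarrow> eval f n w \<Longrightarrow> v = w"
proof (induction arbitrary: w rule: eval.induct)
  case (eval_Comp g n m f k)
  from eval_Comp.prems obtain m' where "eval g n m'" "eval f m' w" by (rule eval_CompE)
  with eval_Comp.IH show ?case by metis
next
  case (eval_Pair f n a g b)
  from eval_Pair.prems obtain a' b' where "eval f n a'" "eval g n b'" "w = prod_encode (a', b')"
    by (rule eval_PairE)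
  with eval_Pair.IH show ?case by metis
next
  case (eval_Rec0 f x v g)
  from eval_Rec0.prems show ?case
    by (rule eval_RecE) (use eval_Rec0.IH in auto)
next
  case (eval_RecS f g x k u v)
  from eval_RecS.prems show ?case
  proof (rule eval_RecE)
    fix x' k' u'
    assume h: "prod_encode (x, Suc k) = prod_encode (x', Suc k')"
      "eval (Rec f g) (prod_encode (x', k')) u'" "eval g (prod_encode (x', prod_encode (k', u'))) w"
    then have "x' = x" "k' = k" by simp_all
    with h eval_RecS.IH show ?thesis by metis
  qed simp
next
  case (eval_Mu f n m)
  from eval_Mu.prems show ?case
  proof (rule eval_MuE)
    assume w: "eval f (prod_encode (n, w)) 0" "\<forall>i<w. \<exists>v. eval f (prod_encode (n, i)) v \<and> 0 < v"
    have False if "m < w"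
      using w(2) that eval_Mu.IH(1) by fastforce
    moreover have False if "w < m"
      using eval_Mu.IH(2) that w(1) by fastforce
    ultimately show ?thesis by (meson linorder_neqE_nat)
  qed
qed (auto elim: eval_ZE eval_SE eval_FstE eval_SndE)

definition total_recursive :: "(nat \<Rightarrow> nat) \<Rightarrow> bool" where
  "total_recursive h \<longleftrightarrow> (\<exists>r. \<forall>n. eval r n (h n))"

abbreviation pfst :: "nat \<Rightarrow> nat" where "pfst n \<equiv> fst (prod_decode n)"
abbreviation psnd :: "nat \<Rightarrow> nat" where "psnd n \<equiv> snd (prod_decode n)"

lemma total_recursive_zero: "total_recursive (\<lambda>n. 0)"
  unfolding total_recursive_def by (metis eval_Z)

lemma total_recursive_Suc: "total_recursive f \<Longrightarrow> total_recursive (\<lambda>n. Suc (f n))"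
  unfolding total_recursive_def by (metis eval_S eval_Comp)

lemma total_recursive_pfst: "total_recursive f \<Longrightarrow> total_recursive (\<lambda>n. pfst (f n))"
  unfolding total_recursive_def by (metis eval_Fst eval_Comp)

lemma total_recursive_psnd: "total_recursive f \<Longrightarrow> total_recursive (\<lambda>n. psnd (f n))"
  unfolding total_recursive_def by (metis eval_Snd eval_Comp)

lemma total_recursive_comp: "total_recursive f \<Longrightarrow> total_recursive g \<Longrightarrow> total_recursive (\<lambda>n. f (g n))"
  unfolding total_recursive_def by (metis eval_Comp)

lemma total_recursive_pair:
  "total_recursive f \<Longrightarrow> total_recursive g \<Longrightarrow> total_recursive (\<lambda>n. prod_encode (f n, g n))"
  unfolding total_recursive_def by (metis eval_Pair)

lemma total_recursive_id: "total_recursive (\<lambda>n. n)"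
proof -
  have "total_recursive (\<lambda>n. prod_encode (pfst n, psnd n))"
    unfolding total_recursive_def by (metis eval_Pair eval_Fst eval_Snd)
  then show ?thesis by simp
qed

lemma total_recursive_const: "total_recursive (\<lambda>n. c)"
  by (induction c) (auto intro: total_recursive_zero total_recursive_Suc)

lemma total_recursive_app2:
  "total_recursive (\<lambda>p. h (pfst p) (psnd p)) \<Longrightarrow> total_recursive a \<Longrightarrow> total_recursive b \<Longrightarrow>
   total_recursive (\<lambda>n. h (a n) (b n))"
  using total_recursive_comp[of "\<lambda>p. h (pfst p) (psnd p)" "\<lambda>n. prod_encode (a n, b n)"]
    total_recursive_pair by simp

primrec prim_rec :: "(nat \<Rightarrow> nat) \<Rightarrow> (nat \<Rightarrow> nat) \<Rightarrow> nat \<Rightarrow> nat \<Rightarrow> nat" where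
  "prim_rec f g x 0 = f x"
| "prim_rec f g x (Suc k) = g (prod_encode (x, prod_encode (k, prim_rec f g x k)))"

lemma total_recursive_prim_rec:
  assumes "total_recursive f" "total_recursive g" "total_recursive a" "total_recursive b"
  shows "total_recursive (\<lambda>n. prim_rec f g (a n) (b n))"
proof -
  obtain rf where rf: "\<And>n. eval rf n (f n)" using assms(1) unfolding total_recursive_def by blast
  obtain rg where rg: "\<And>n. eval rg n (g n)" using assms(2) unfolding total_recursive_def by blast
  have "eval (Rec rf rg) (prod_encode (x, k)) (prim_rec f g x k)" for x k
    by (induction k) (auto intro: eval_Rec0 eval_RecS rf rg)
  then have "total_recursive (\<lambda>n. prim_rec f g (pfst n) (psnd n))"
    unfolding total_recursive_def by (metis prod_decode_inverse prod.collapse)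
  from total_recursive_app2[OF this assms(3,4)] show ?thesis .
qed

lemmas total_recursive_intros =
  total_recursive_zero total_recursive_id total_recursive_const total_recursive_Suc
  total_recursive_pfst total_recursive_psnd total_recursive_pair total_recursive_prim_rec

lemma total_recursive_add:
  assumes "total_recursive a" "total_recursive b"
  shows "total_recursive (\<lambda>n. a n + b n)"
proof -
  have "prim_rec (\<lambda>x. x) (\<lambda>m. Suc (psnd (psnd m))) x k = x + k" for x k
    by (induction k) auto
  moreover have "total_recursive (\<lambda>n. prim_rec (\<lambda>x. x) (\<lambda>m. Suc (psnd (psnd m))) (a n) (b n))"
    by (intro total_recursive_intros assms)
  ultimately show ?thesis by simp
qed

lemma total_recursive_diff:
  assumes "total_recursive a" "total_recursive b"
  shows "total_recursive (\<lambda>n. a n - b n)"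
proof -
  have pred: "prim_rec (\<lambda>x. 0) (\<lambda>m. pfst (psnd m)) x k = k - 1" for x k
    by (induction k) auto
  have "prim_rec (\<lambda>x. x) (\<lambda>m. prim_rec (\<lambda>x. 0) (\<lambda>m. pfst (psnd m)) 0 (psnd (psnd m))) x k = x - k"
    for x k by (induction k) (auto simp: pred)
  moreover have "total_recursive (\<lambda>n. prim_rec (\<lambda>x. x)
      (\<lambda>m. prim_rec (\<lambda>x. 0) (\<lambda>m. pfst (psnd m)) 0 (psnd (psnd m))) (a n) (b n))"
    by (intro total_recursive_intros assms)
  ultimately show ?thesis by simp
qed

lemma total_recursive_if_zero:
  assumes "total_recursive c" "total_recursive a" "total_recursive b"
  shows "total_recursive (\<lambda>n. if c n = 0 then a n else b n)"
proof -
  have "prim_rec a (\<lambda>m. b (pfst m)) x k = (if k = 0 then a x else b x)" for x k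
    by (cases k) auto
  moreover have "total_recursive (\<lambda>n. prim_rec a (\<lambda>m. b (pfst m)) n (c n))"
    by (intro total_recursive_intros total_recursive_comp[OF assms(3)] assms)
  ultimately show ?thesis by simp
qed

lemma total_recursive_pow2:
  assumes "total_recursive a"
  shows "total_recursive (\<lambda>n. 2 ^ a n)"
proof -
  have "prim_rec (\<lambda>x. 1) (\<lambda>m. psnd (psnd m) + psnd (psnd m)) x k = 2 ^ k" for x k
    by (induction k) auto
  moreover have "total_recursive (\<lambda>n. prim_rec (\<lambda>x. 1) (\<lambda>m. psnd (psnd m) + psnd (psnd m)) 0 (a n))"
    by (intro total_recursive_intros total_recursive_add assms)
  ultimately show ?thesis by simp
qed

lemma total_recursive_mod2:
  assumes "total_recursive a"
  shows "total_recursive (\<lambda>n. a n mod 2)"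
proof -
  have "prim_rec (\<lambda>x. 0) (\<lambda>m. 1 - psnd (psnd m)) x k = k mod 2" for x k
    by (induction k) (auto simp: mod_Suc)
  moreover have "total_recursive (\<lambda>n. prim_rec (\<lambda>x. 0) (\<lambda>m. 1 - psnd (psnd m)) 0 (a n))"
    by (intro total_recursive_intros total_recursive_diff assms)
  ultimately show ?thesis by simp
qed

lemma total_recursive_div2:
  assumes "total_recursive a"
  shows "total_recursive (\<lambda>n. a n div 2)"
proof -
  have "prim_rec (\<lambda>x. 0) (\<lambda>m. psnd (psnd m) + pfst (psnd m) mod 2) x k = k div 2" for x k
    by (induction k) (auto simp: div2_Suc_Suc, presburger)
  moreover have "total_recursive (\<lambda>n. prim_rec (\<lambda>x. 0)
      (\<lambda>m. psnd (psnd m) + pfst (psnd m) mod 2) 0 (a n))"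
    by (intro total_recursive_intros total_recursive_add total_recursive_mod2 assms)
  ultimately show ?thesis by simp
qed

section \<open>Decidable and \<open>\<Sigma>\<^sub>1\<close> predicates\<close>

definition decidable :: "(nat \<Rightarrow> bool) \<Rightarrow> bool" where
  "decidable P \<longleftrightarrow> total_recursive (\<lambda>n. if P n then 0 else 1)"

lemma decidable_le:
  assumes "total_recursive a" "total_recursive b"
  shows "decidable (\<lambda>n. a n \<le> b n)"
proof -
  have "total_recursive (\<lambda>n. if a n - b n = 0 then 0 else 1)"
    by (intro total_recursive_if_zero total_recursive_diff total_recursive_intros assms)
  then show ?thesis unfolding decidable_def by simp
qed

lemma decidable_eq:
  assumes "total_recursive a" "total_recursive b"
  shows "decidable (\<lambda>n. a n = b n)"
proof -
  have "total_recursive (\<lambda>n. if (a n - b n) + (b n - a n) = 0 then 0 else 1)"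
    by (intro total_recursive_if_zero total_recursive_add total_recursive_diff
        total_recursive_intros assms)
  moreover have "(a n - b n) + (b n - a n) = 0 \<longleftrightarrow> a n = b n" for n by auto
  ultimately show ?thesis unfolding decidable_def by simp
qed

lemma decidable_conj:
  assumes "decidable P" "decidable Q"
  shows "decidable (\<lambda>n. P n \<and> Q n)"
proof -
  have "total_recursive (\<lambda>n. if (if P n then 0 else 1 :: nat) = 0 then if Q n then 0 else 1 else 1)"
    by (intro total_recursive_if_zero total_recursive_const assms[unfolded decidable_def])
  moreover have "(if (if P n then 0 else 1 :: nat) = 0 then if Q n then 0 else 1 else 1) =
      (if P n \<and> Q n then 0 else 1 :: nat)" for n
    by simp
  ultimately show ?thesis unfolding decidable_def by simp
qed

lemma decidable_disj:
  assumes "decidable P" "decidable Q"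
  shows "decidable (\<lambda>n. P n \<or> Q n)"
proof -
  have "total_recursive (\<lambda>n. if (if P n then 0 else 1 :: nat) = 0 then 0 else if Q n then 0 else 1)"
    by (intro total_recursive_if_zero total_recursive_zero assms[unfolded decidable_def])
  moreover have "(if (if P n then 0 else 1 :: nat) = 0 then 0 else if Q n then 0 else 1) =
      (if P n \<or> Q n then 0 else 1 :: nat)" for n
    by simp
  ultimately show ?thesis unfolding decidable_def by simp
qed

lemma decidable_comp: "decidable P \<Longrightarrow> total_recursive a \<Longrightarrow> decidable (\<lambda>n. P (a n))"
  unfolding decidable_def using total_recursive_comp by fastforce

text \<open>Merging existential witnesses handles disjunctions and projections without dovetailing.\<close>

definition sigma1 :: "(nat \<Rightarrow> bool) \<Rightarrow> bool" where
  "sigma1 P \<longleftrightarrow> (\<exists>Q. decidable Q \<and> (\<forall>n. P n \<longleftrightarrow> (\<exists>m. Q (prod_encode (n, m)))))"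

lemma ce_set_sigma1:
  assumes "sigma1 P"
  shows "ce_set {n. P n}"
proof -
  obtain Q where dQ: "decidable Q" and PQ: "\<And>n. P n \<longleftrightarrow> (\<exists>m. Q (prod_encode (n, m)))"
    using assms unfolding sigma1_def by blast
  obtain r where r: "\<And>n. eval r n (if Q n then 0 else 1)"
    using dQ unfolding decidable_def total_recursive_def by blast
  have r_zero: "eval r k 0 \<longleftrightarrow> Q k" for k
    using r[of k] eval_deterministic[of r k 0 1] by (cases "Q k") auto
  have "(\<exists>v. eval (Mu r) n v) \<longleftrightarrow> (\<exists>m. Q (prod_encode (n, m)))" for n
  proof
    assume "\<exists>v. eval (Mu r) n v"
    then obtain v where "eval (Mu r) n v" by blast
    then have "eval r (prod_encode (n, v)) 0" by (rule eval_MuE)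
    then show "\<exists>m. Q (prod_encode (n, m))" using r_zero by blast
  next
    assume ex: "\<exists>m. Q (prod_encode (n, m))"
    define m where "m = (LEAST m. Q (prod_encode (n, m)))"
    have "eval (Mu r) n m"
    proof (rule eval_Mu)
      have "Q (prod_encode (n, m))" unfolding m_def using ex by (rule LeastI_ex)
      then show "eval r (prod_encode (n, m)) 0" using r_zero by blast
      show "\<forall>i<m. \<exists>v. eval r (prod_encode (n, i)) v \<and> v \<noteq> 0"
      proof (intro allI impI)
        fix i assume "i < m"
        then have "\<not> Q (prod_encode (n, i))" unfolding m_def by (rule not_less_Least)
        then have "eval r (prod_encode (n, i)) 1" using r[of "prod_encode (n, i)"] by simp
        then show "\<exists>v. eval r (prod_encode (n, i)) v \<and> v \<noteq> 0" by blast
      qed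
    qed
    then show "\<exists>v. eval (Mu r) n v" by blast
  qed
  then show ?thesis unfolding ce_set_def PQ by blast
qed

lemma sigma1_disj:
  assumes "sigma1 P" "sigma1 R"
  shows "sigma1 (\<lambda>n. P n \<or> R n)"
proof -
  obtain Q where "decidable Q" "\<And>n. P n \<longleftrightarrow> (\<exists>m. Q (prod_encode (n, m)))"
    using assms(1) unfolding sigma1_def by blast
  moreover obtain Q' where "decidable Q'" "\<And>n. R n \<longleftrightarrow> (\<exists>m. Q' (prod_encode (n, m)))"
    using assms(2) unfolding sigma1_def by blast
  ultimately show ?thesis
    unfolding sigma1_def by (intro exI[of _ "\<lambda>p. Q p \<or> Q' p"]) (auto intro: decidable_disj)
qed

lemma sigma1_conj_decidable:
  assumes "decidable D" "sigma1 P"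
  shows "sigma1 (\<lambda>n. D n \<and> P n)"
proof -
  obtain Q where "decidable Q" "\<And>n. P n \<longleftrightarrow> (\<exists>m. Q (prod_encode (n, m)))"
    using assms(2) unfolding sigma1_def by blast
  moreover have "decidable (\<lambda>p. D (pfst p))"
    by (intro decidable_comp[OF assms(1)] total_recursive_intros)
  ultimately show ?thesis
    unfolding sigma1_def by (intro exI[of _ "\<lambda>p. D (pfst p) \<and> Q p"]) (auto intro: decidable_conj)
qed

lemma sigma1_comp:
  assumes "sigma1 P" "total_recursive a"
  shows "sigma1 (\<lambda>n. P (a n))"
proof -
  obtain Q where dQ: "decidable Q" and PQ: "\<And>n. P n \<longleftrightarrow> (\<exists>m. Q (prod_encode (n, m)))"
    using assms(1) unfolding sigma1_def by blast
  have "decidable (\<lambda>p. Q (prod_encode (a (pfst p), psnd p)))"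
    by (intro decidable_comp[OF dQ] total_recursive_intros total_recursive_comp[OF assms(2)])
  then show ?thesis
    unfolding sigma1_def PQ by (intro exI[of _ "\<lambda>p. Q (prod_encode (a (pfst p), psnd p))"]) simp
qed

lemma sigma1_ex:
  assumes "sigma1 P"
  shows "sigma1 (\<lambda>n. \<exists>k. P (prod_encode (n, k)))"
proof -
  obtain Q where dQ: "decidable Q" and PQ: "\<And>n. P n \<longleftrightarrow> (\<exists>m. Q (prod_encode (n, m)))"
    using assms unfolding sigma1_def by blast
  define Q' where "Q' p = Q (prod_encode (prod_encode (pfst p, pfst (psnd p)), psnd (psnd p)))" for p
  have "decidable Q'"
    unfolding Q'_def by (intro decidable_comp[OF dQ] total_recursive_intros)
  moreover have "(\<exists>k. P (prod_encode (n, k))) \<longleftrightarrow> (\<exists>m. Q' (prod_encode (n, m)))" for n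
    unfolding PQ Q'_def by (auto, metis fst_conv snd_conv prod_encode_inverse)
  ultimately show ?thesis unfolding sigma1_def by blast
qed

section \<open>Evaluation with a time budget\<close>

text \<open>The budget \<open>t\<close> bounds every minimisation search. The result
  is \<open>Suc v\<close> when the computation yields \<open>v\<close> within the budget and \<open>0\<close> otherwise.
  In the search state of \<open>mu_step\<close>, \<open>0\<close> means still searching, \<open>1\<close> means that an
  earlier candidate did not converge within the budget, and \<open>j + 2\<close> means that \<open>j\<close> was found.\<close>

definition rec_step :: "(nat \<Rightarrow> nat \<Rightarrow> nat) \<Rightarrow> nat \<Rightarrow> nat" where
  "rec_step G m = (if psnd (psnd m) = 0 then 0
      else G (prod_encode (pfst (pfst m), prod_encode (pfst (psnd m), psnd (psnd m) - 1))) (psnd (pfst m)))"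

definition mu_step :: "(nat \<Rightarrow> nat \<Rightarrow> nat) \<Rightarrow> nat \<Rightarrow> nat" where
  "mu_step F m = (if psnd (psnd m) = 0 then
       (if F (prod_encode (pfst (pfst m), pfst (psnd m))) (psnd (pfst m)) = 0 then 1
        else if F (prod_encode (pfst (pfst m), pfst (psnd m))) (psnd (pfst m)) - 1 = 0
          then Suc (Suc (pfst (psnd m)))
        else 0)
     else psnd (psnd m))"

primrec timed_eval :: "recf \<Rightarrow> nat \<Rightarrow> nat \<Rightarrow> nat" where
  "timed_eval Z n t = 1"
| "timed_eval S n t = Suc (Suc n)"
| "timed_eval Fst n t = Suc (pfst n)"
| "timed_eval Snd n t = Suc (psnd n)"
| "timed_eval (Comp f g) n t =
    (if timed_eval g n t = 0 then 0 else timed_eval f (timed_eval g n t - 1) t)"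
| "timed_eval (recf.Pair f g) n t =
    (if timed_eval f n t = 0 then 0 else if timed_eval g n t = 0 then 0
     else Suc (prod_encode (timed_eval f n t - 1, timed_eval g n t - 1)))"
| "timed_eval (Rec f g) n t =
    prim_rec (\<lambda>X. timed_eval f (pfst X) (psnd X)) (rec_step (timed_eval g)) (prod_encode (pfst n, t)) (psnd n)"
| "timed_eval (Mu f) n t = prim_rec (\<lambda>X. 0) (mu_step (timed_eval f)) (prod_encode (n, t)) t - 1"

lemma total_recursive_timed_eval: "total_recursive (\<lambda>p. timed_eval f (pfst p) (psnd p))"
proof (induction f)
  case (Comp f g)
  show ?case
    by (simp only: timed_eval.simps)
      (intro total_recursive_intros total_recursive_if_zero total_recursive_diff
        total_recursive_app2[OF Comp(1)] total_recursive_app2[OF Comp(2)])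
next
  case (Pair f g)
  show ?case
    by (simp only: timed_eval.simps)
      (intro total_recursive_intros total_recursive_if_zero total_recursive_diff
        total_recursive_app2[OF Pair(1)] total_recursive_app2[OF Pair(2)])
next
  case (Rec f g)
  show ?case
    unfolding timed_eval.simps rec_step_def
    by (intro total_recursive_intros total_recursive_if_zero total_recursive_diff
        total_recursive_app2[OF Rec(1)] total_recursive_app2[OF Rec(2)])
next
  case (Mu f)
  show ?case
    unfolding timed_eval.simps mu_step_def
    by (intro total_recursive_intros total_recursive_if_zero total_recursive_diff
        total_recursive_app2[OF Mu])
qed (simp only: timed_eval.simps; intro total_recursive_intros)+

lemma rec_step_app: "rec_step G (prod_encode (X, prod_encode (i, s))) =
   (if s = 0 then 0 else G (prod_encode (pfst X, prod_encode (i, s - 1))) (psnd X))"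
  by (simp add: rec_step_def)

lemma mu_step_app: "mu_step F (prod_encode (X, prod_encode (j, s))) =
   (if s = 0 then
       (if F (prod_encode (pfst X, j)) (psnd X) = 0 then 1
        else if F (prod_encode (pfst X, j)) (psnd X) = 1 then Suc (Suc j)
        else 0)
     else s)"
  by (auto simp: mu_step_def)

abbreviation mu_search :: "(nat \<Rightarrow> nat \<Rightarrow> nat) \<Rightarrow> nat \<Rightarrow> nat \<Rightarrow> nat \<Rightarrow> nat" where
  "mu_search F n t J \<equiv> prim_rec (\<lambda>X. 0) (mu_step F) (prod_encode (n, t)) J"

lemma mu_search_invariant:
  "(mu_search F n t J = 0 \<longrightarrow> (\<forall>i<J. 2 \<le> F (prod_encode (n, i)) t)) \<and>
   (\<forall>j. mu_search F n t J = Suc (Suc j) \<longrightarrow>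
      j < J \<and> F (prod_encode (n, j)) t = 1 \<and> (\<forall>i<j. 2 \<le> F (prod_encode (n, i)) t))"
  by (induction J) (auto simp: mu_step_app less_Suc_eq split: if_splits)

lemma mu_search_found:
  assumes "F (prod_encode (n, j)) t = 1" "\<forall>i<j. 2 \<le> F (prod_encode (n, i)) t"
  shows "mu_search F n t J = (if J \<le> j then 0 else Suc (Suc j))"
proof (induction J)
  case (Suc J)
  then show ?case
    using assms by (cases "J < j") (auto simp: mu_step_app)
qed simp

lemma timed_eval_Rec_sound:
  assumes "\<And>n t v. timed_eval f n t = Suc v \<Longrightarrow> eval f n v"
    and "\<And>n t v. timed_eval g n t = Suc v \<Longrightarrow> eval g n v"
  shows "timed_eval (Rec f g) (prod_encode (x, k)) t = Suc v \<Longrightarrow> eval (Rec f g) (prod_encode (x, k)) v"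
proof (induction k arbitrary: v)
  case 0
  then show ?case by (auto intro: eval_Rec0 assms(1))
next
  case (Suc k)
  then obtain u where u: "timed_eval (Rec f g) (prod_encode (x, k)) t = Suc u"
    by (cases "timed_eval (Rec f g) (prod_encode (x, k)) t") (auto simp: rec_step_app)
  with Suc.prems have "timed_eval g (prod_encode (x, prod_encode (k, u))) t = Suc v"
    by (simp add: rec_step_app)
  with Suc.IH[OF u] show ?case by (auto intro: eval_RecS assms(2))
qed

lemma timed_eval_sound: "timed_eval f n t = Suc v \<Longrightarrow> eval f n v"
proof (induction f arbitrary: n t v)
  case (Comp f g)
  then obtain m where m: "timed_eval g n t = Suc m"
    by (cases "timed_eval g n t") (auto split: if_splits)
  with Comp.prems have "timed_eval f m t = Suc v" by simp
  with m Comp.IH show ?case by (blast intro: eval_Comp)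
next
  case (Pair f g)
  then obtain a b where a: "timed_eval f n t = Suc a" and b: "timed_eval g n t = Suc b"
    by (cases "timed_eval f n t"; cases "timed_eval g n t") (auto split: if_splits)
  with Pair.prems have "v = prod_encode (a, b)" by simp
  with a b Pair.IH show ?case by (blast intro: eval_Pair)
next
  case (Rec f g)
  have "eval (Rec f g) (prod_encode (pfst n, psnd n)) v"
    using Rec.prems by (intro timed_eval_Rec_sound[OF Rec.IH]) simp_all
  then show ?case by simp
next
  case (Mu f)
  then have "mu_search (timed_eval f) n t t = Suc (Suc v)" by simp
  with mu_search_invariant[of "timed_eval f" n t t]
  have found: "timed_eval f (prod_encode (n, v)) t = 1"
    and before: "\<forall>i<v. 2 \<le> timed_eval f (prod_encode (n, i)) t" by auto
  have "\<exists>w. eval f (prod_encode (n, i)) w \<and> w \<noteq> 0" if "i < v" for i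
  proof -
    from before that obtain w where "timed_eval f (prod_encode (n, i)) t = Suc (Suc w)"
      by (metis add_2_eq_Suc le_Suc_ex)
    with Mu.IH show ?thesis by blast
  qed
  with found Mu.IH show ?case by (auto intro: eval_Mu)
qed (auto intro: eval.intros)

lemma timed_eval_complete: "eval f n v \<Longrightarrow> \<forall>\<^sub>F t in sequentially. timed_eval f n t = Suc v"
proof (induction rule: eval.induct)
  case (eval_Comp g n m f k)
  from eval_Comp.IH show ?case by eventually_elim simp
next
  case (eval_Pair f n a g b)
  from eval_Pair.IH show ?case by eventually_elim simp
next
  case (eval_RecS f g x k u v)
  from eval_RecS.IH show ?case by eventually_elim (simp add: rec_step_app)
next
  case (eval_Mu f n m)
  have "\<forall>i\<in>{..<m}. \<forall>\<^sub>F t in sequentially. 2 \<le> timed_eval f (prod_encode (n, i)) t"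
  proof
    fix i assume "i \<in> {..<m}"
    with eval_Mu.IH(2) obtain w where "w \<noteq> 0"
      "\<forall>\<^sub>F t in sequentially. timed_eval f (prod_encode (n, i)) t = Suc w" by blast
    then show "\<forall>\<^sub>F t in sequentially. 2 \<le> timed_eval f (prod_encode (n, i)) t"
      by (auto elim: eventually_mono)
  qed
  then have "\<forall>\<^sub>F t in sequentially. \<forall>i\<in>{..<m}. 2 \<le> timed_eval f (prod_encode (n, i)) t"
    by (rule eventually_ball_finite[OF finite_lessThan])
  moreover have "\<forall>\<^sub>F t in sequentially. Suc m \<le> t" by simp
  ultimately show ?case
    using eval_Mu.IH(1) by eventually_elim (simp add: mu_search_found)
qed simp_all

lemma eval_iff_timed_eval: "eval f n v \<longleftrightarrow> (\<exists>t. timed_eval f n t = Suc v)"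
  using timed_eval_sound timed_eval_complete eventually_happens'[OF sequentially_bot] by blast

lemma sigma1_eval_graph: "sigma1 (\<lambda>p. eval r (pfst p) (psnd p))"
proof -
  have "decidable (\<lambda>q. timed_eval r (pfst (pfst q)) (psnd q) = Suc (psnd (pfst q)))"
    by (intro decidable_eq total_recursive_intros total_recursive_app2[OF total_recursive_timed_eval])
  then show ?thesis
    unfolding sigma1_def eval_iff_timed_eval
    by (intro exI[of _ "\<lambda>q. timed_eval r (pfst (pfst q)) (psnd q) = Suc (psnd (pfst q))"]) simp
qed

section \<open>Partial computable string functions and conditional complexity\<close>

lemma partial_computable_total:
  assumes "total_recursive h"
  shows "partial_computable (\<lambda>w. Some (dec (h (enc w))))"
proof -
  obtain r where "\<And>n. eval r n (h n)" using assms unfolding total_recursive_def by blast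
  then have "eval r n v \<longleftrightarrow> v = h n" for n v using eval_deterministic by blast
  then show ?thesis unfolding partial_computable_def by (intro exI[of _ r]) auto
qed

lemma partial_computable_precomp:
  assumes "partial_computable U" "total_recursive h"
  shows "partial_computable (\<lambda>w. U (dec (h (enc w))))"
proof -
  obtain r where r: "\<And>x v. eval r (enc x) v \<longleftrightarrow> (\<exists>z. U x = Some z \<and> v = enc z)"
    using assms(1) unfolding partial_computable_def by blast
  obtain rh where rh: "\<And>n. eval rh n (h n)" using assms(2) unfolding total_recursive_def by blast
  have "eval (Comp r rh) n v \<longleftrightarrow> eval r (h n) v" for n v
  proof
    assume "eval (Comp r rh) n v"
    then obtain m where "eval rh n m" "eval r m v" by (rule eval_CompE)
    with rh eval_deterministic show "eval r (h n) v" by metis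
  next
    assume "eval r (h n) v"
    with rh show "eval (Comp r rh) n v" by (blast intro: eval_Comp)
  qed
  then have "eval (Comp r rh) (enc w) v \<longleftrightarrow> (\<exists>z. U (dec (h (enc w))) = Some z \<and> v = enc z)" for w v
    using r[of "dec (h (enc w))"] by simp
  then show ?thesis unfolding partial_computable_def by blast
qed

lemma partial_computable_bind:
  assumes "partial_computable U" "partial_computable f"
  shows "partial_computable (\<lambda>w. Option.bind (U w) f)"
proof -
  obtain r where r: "\<And>x v. eval r (enc x) v \<longleftrightarrow> (\<exists>z. U x = Some z \<and> v = enc z)"
    using assms(1) unfolding partial_computable_def by blast
  obtain rf where rf: "\<And>x v. eval rf (enc x) v \<longleftrightarrow> (\<exists>z. f x = Some z \<and> v = enc z)"
    using assms(2) unfolding partial_computable_def by blast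
  have "eval (Comp rf r) (enc w) v \<longleftrightarrow> (\<exists>z. Option.bind (U w) f = Some z \<and> v = enc z)" for w v
  proof
    assume "eval (Comp rf r) (enc w) v"
    then obtain m where "eval r (enc w) m" "eval rf m v" by (rule eval_CompE)
    with r rf show "\<exists>z. Option.bind (U w) f = Some z \<and> v = enc z" by auto
  next
    assume "\<exists>z. Option.bind (U w) f = Some z \<and> v = enc z"
    then obtain x where "U w = Some x" "\<exists>z. f x = Some z \<and> v = enc z" by (auto split: bind_splits)
    with r rf show "eval (Comp rf r) (enc w) v" by (auto intro: eval_Comp)
  qed
  then show ?thesis unfolding partial_computable_def by blast
qed

lemma Ccond_le_enat_iff:
  "Ccond T x y \<le> enat j \<longleftrightarrow> (\<exists>z. length z \<le> j \<and> T (str_pair z y) = Some x)"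
proof
  let ?S = "{z. T (str_pair z y) = Some x}"
  assume le: "Ccond T x y \<le> enat j"
  have "?S \<noteq> {}"
  proof
    assume "?S = {}"
    then have "Ccond T x y = \<infinity>" unfolding Ccond_def by (simp add: top_enat_def)
    with le show False by simp
  qed
  then have "Inf ((\<lambda>z. enat (length z)) ` ?S) \<in> (\<lambda>z. enat (length z)) ` ?S"
    unfolding Inf_enat_def by (auto intro: LeastI)
  then obtain z where "z \<in> ?S" "Ccond T x y = enat (length z)" unfolding Ccond_def by auto
  with le show "\<exists>z. length z \<le> j \<and> T (str_pair z y) = Some x" by auto
next
  assume "\<exists>z. length z \<le> j \<and> T (str_pair z y) = Some x"
  then show "Ccond T x y \<le> enat j"
    unfolding Ccond_def by (auto intro: INF_lower2)
qed

lemma upper_semicomputableI: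
  assumes "sigma1 (\<lambda>p. B (dec (pfst p)) (dec (pfst (psnd p))) \<le> psnd (psnd p))"
  shows "upper_semicomputable B"
proof -
  have "{prod_encode (enc x, prod_encode (enc y, k)) | x y k. B x y \<le> k} =
      {p. B (dec (pfst p)) (dec (pfst (psnd p))) \<le> psnd (psnd p)}"
  proof (intro set_eqI iffI)
    fix p assume "p \<in> {p. B (dec (pfst p)) (dec (pfst (psnd p))) \<le> psnd (psnd p)}"
    moreover have "p = prod_encode (enc (dec (pfst p)), prod_encode (enc (dec (pfst (psnd p))), psnd (psnd p)))"
      by simp
    ultimately show "p \<in> {prod_encode (enc x, prod_encode (enc y, k)) | x y k. B x y \<le> k}"
      by blast
  qed auto
  with ce_set_sigma1[OF assms] show ?thesis unfolding upper_semicomputable_def by simp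
qed

section \<open>Complexity relative to an optimal machine\<close>

lemma discrete_intermediate_value:
  fixes g :: "nat \<Rightarrow> nat"
  assumes "g 0 < N" "N \<le> g L" "\<And>i. i < L \<Longrightarrow> g (Suc i) \<le> g i + D"
  obtains i where "N \<le> g i" "g i \<le> N + D"
proof -
  define i where "i = (LEAST i. N \<le> g i)"
  have "N \<le> g i" "i \<le> L" unfolding i_def by (auto intro: LeastI Least_le assms(2))
  moreover from this assms(1) obtain i' where i': "i = Suc i'" by (cases i) auto
  moreover have "\<not> N \<le> g i'"
    using i' not_less_Least[of i' "\<lambda>i. N \<le> g i"] unfolding i_def by simp
  ultimately show ?thesis using assms(3)[of i'] that by simp
qed

locale optimal_decompressor =
  fixes U :: "str \<Rightarrow> str option"
  assumes U_optimal: "optimal_machine U"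
begin

lemma partial_computable_U: "partial_computable U"
  using U_optimal unfolding optimal_machine_def by blast

lemma Ccond_le_program:
  assumes "partial_computable T"
  obtains c where "\<And>x y z. T (str_pair z y) = Some x \<Longrightarrow> Ccond U x y \<le> enat (length z + c)"
proof -
  obtain c where c: "\<And>x y. Ccond U x y \<le> Ccond T x y + enat c"
    using U_optimal assms unfolding optimal_machine_def by blast
  have "Ccond U x y \<le> enat (length z + c)" if "T (str_pair z y) = Some x" for x y z
  proof -
    have "Ccond T x y \<le> enat (length z)" using that Ccond_le_enat_iff by blast
    then show ?thesis using c[of x y] by (metis add_right_mono order_trans plus_enat_simps(1))
  qed
  then show ?thesis using that by blast
qed

lemma Ccond_le_length: obtains c where "\<And>x y. Ccond U x y \<le> enat (length x + c)"
proof -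
  have pc: "partial_computable (\<lambda>w. Some (dec (pfst (enc w))))"
    by (intro partial_computable_total total_recursive_intros)
  obtain c where c: "\<And>x y z. Some (dec (pfst (enc (str_pair z y)))) = Some x \<Longrightarrow>
      Ccond U x y \<le> enat (length z + c)"
    using Ccond_le_program[OF pc] by blast
  have "Ccond U x y \<le> enat (length x + c)" for x y using c[where x = x and y = y and z = x] by simp
  then show ?thesis by (rule that)
qed

definition C :: "str \<Rightarrow> str \<Rightarrow> nat" where
  "C x y = the_enat (Ccond U x y)"

lemma Ccond_eq_C: "Ccond U x y = enat (C x y)"
proof -
  obtain c where "Ccond U x y \<le> enat (length x + c)" using Ccond_le_length by blast
  then show ?thesis unfolding C_def by (cases "Ccond U x y") auto
qed

lemma C_le_length: obtains c where "\<And>x y. C x y \<le> length x + c"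
  using Ccond_le_length Ccond_eq_C by (metis enat_ord_simps(1))

lemma C_le_iff: "C x y \<le> j \<longleftrightarrow> (\<exists>z. length z \<le> j \<and> U (str_pair z y) = Some x)"
  using Ccond_le_enat_iff[of U x y j] by (simp add: Ccond_eq_C)

lemma C_program: obtains z where "length z = C x y" "U (str_pair z y) = Some x"
  using C_le_iff[of x y "C x y"] C_le_iff le_antisym by blast

lemma C_le_program:
  assumes "partial_computable T"
  obtains c where "\<And>x y z. T (str_pair z y) = Some x \<Longrightarrow> C x y \<le> length z + c"
  using Ccond_le_program[OF assms] by (metis Ccond_eq_C enat_ord_simps(1))

lemma C_le_C_empty: obtains c where "\<And>x y. C x y \<le> C x [] + c"
proof -
  have pc: "partial_computable (\<lambda>w. U (dec (prod_encode (pfst (enc w), 0))))"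
    by (intro partial_computable_precomp partial_computable_U total_recursive_intros)
  obtain c where c: "\<And>x y z. U (dec (prod_encode (pfst (enc (str_pair z y)), 0))) = Some x \<Longrightarrow>
      C x y \<le> length z + c"
    using C_le_program[OF pc] by blast
  have "C x y \<le> C x [] + c" for x y
  proof -
    obtain z where "length z = C x []" "U (str_pair z []) = Some x" by (rule C_program)
    with c[of z y x] show ?thesis by (simp add: str_pair_def)
  qed
  then show ?thesis by (rule that)
qed

lemma C_self_le: obtains c where "\<And>x. C x x \<le> c"
proof -
  have pc: "partial_computable (\<lambda>w. Some (dec (psnd (enc w))))"
    by (intro partial_computable_total total_recursive_intros)
  obtain c where c: "\<And>x y z. Some (dec (psnd (enc (str_pair z y)))) = Some x \<Longrightarrow>
      C x y \<le> length z + c"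
    using C_le_program[OF pc] by blast
  have "C x x \<le> c" for x using c[where x = x and y = x and z = "[]"] by simp
  then show ?thesis by (rule that)
qed

lemma C_map_le:
  assumes "partial_computable f"
  obtains c where "\<And>x y z. f x = Some z \<Longrightarrow> C z y \<le> C x y + c"
proof -
  obtain c where c: "\<And>x y z. Option.bind (U (str_pair z y)) f = Some x \<Longrightarrow> C x y \<le> length z + c"
    using C_le_program[OF partial_computable_bind[OF partial_computable_U assms]] by blast
  have "C z y \<le> C x y + c" if "f x = Some z" for x y z
  proof -
    obtain p where "length p = C x y" "U (str_pair p y) = Some x" by (rule C_program)
    with c[of p y z] that show ?thesis by simp
  qed
  then show ?thesis by (rule that)
qed

text \<open>The machine below sends \<open>\<langle>b # p, y\<rangle>\<close> to \<open>U \<langle>p, b # y\<rangle>\<close>: the code of \<open>b # p\<close> is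
  \<open>2 enc p + 2\<close> or \<open>2 enc p + 1\<close> according to \<open>b\<close>, so \<open>b\<close> is read off its parity.\<close>

lemma C_le_C_Cons: obtains c where "\<And>x y b. C x y \<le> C x (b # y) + c"
proof -
  let ?h = "\<lambda>n. prod_encode ((pfst n - 1) div 2, (psnd n + psnd n + 2) - pfst n mod 2)"
  have pc: "partial_computable (\<lambda>w. U (dec (?h (enc w))))"
    by (intro partial_computable_precomp partial_computable_U total_recursive_intros
        total_recursive_add total_recursive_diff total_recursive_div2 total_recursive_mod2)
  obtain c where c: "\<And>x y z. U (dec (?h (enc (str_pair z y)))) = Some x \<Longrightarrow> C x y \<le> length z + c"
    using C_le_program[OF pc] by blast
  have "C x y \<le> C x (b # y) + (c + 1)" for x y b
  proof -
    obtain p where p: "length p = C x (b # y)" "U (str_pair p (b # y)) = Some x" by (rule C_program)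
    have "?h (enc (str_pair (b # p) y)) = enc (str_pair p (b # y))" by simp
    with p c[of "b # p" y x] show ?thesis by (simp add: str_pair_def)
  qed
  then show ?thesis by (rule that)
qed

lemma C_le_subset: "{x. C x y \<le> n} \<subseteq> (\<lambda>z. the (U (str_pair z y))) ` {z. length z \<le> n}"
  using C_le_iff by force

lemma finite_C_le: "finite {x. C x y \<le> n}"
  using finite_subset[OF C_le_subset] finite_strings_length_le by blast

lemma card_C_le: "card {x. C x y \<le> n} \<le> 2 ^ (n + 1)"
proof -
  have "card {x. C x y \<le> n} \<le> card ((\<lambda>z. the (U (str_pair z y))) ` {z. length z \<le> n})"
    by (rule card_mono[OF finite_imageI[OF finite_strings_length_le] C_le_subset])
  also have "\<dots> \<le> card {z :: str. length z \<le> n}"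
    by (rule card_image_le[OF finite_strings_length_le])
  also have "\<dots> \<le> 2 ^ (n + 1)"
    by (rule card_strings_length_le)
  finally show ?thesis .
qed

lemma exists_incompressible: obtains x where "N \<le> C x []"
proof -
  obtain x where "x \<notin> {x. C x [] \<le> N}"
    using ex_new_if_finite[OF infinite_UNIV_listI finite_C_le] by blast
  then show ?thesis using that[of x] by simp
qed

lemma sigma1_C_le: "sigma1 (\<lambda>p. C (dec (pfst p)) (dec (pfst (psnd p))) \<le> psnd (psnd p))"
proof -
  obtain r where r: "\<And>x v. eval r (enc x) v \<longleftrightarrow> (\<exists>z. U x = Some z \<and> v = enc z)"
    using partial_computable_U unfolding partial_computable_def by blast
  have C_le_eval: "C x y \<le> j \<longleftrightarrow>
      (\<exists>zc. zc + 2 \<le> 2 ^ (j + 1) \<and> eval r (prod_encode (zc, enc y)) (enc x))" for x y j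
  proof -
    have "U (str_pair z y) = Some x \<longleftrightarrow> eval r (prod_encode (enc z, enc y)) (enc x)" for z
      using r[of "str_pair z y" "enc x"] by simp
    then show ?thesis unfolding C_le_iff length_le_iff_enc by (metis enc_dec)
  qed
  define D where "D q \<longleftrightarrow> psnd q + 2 \<le> 2 ^ (psnd (psnd (pfst q)) + 1)" for q
  define E where "E q \<longleftrightarrow> eval r (prod_encode (psnd q, pfst (psnd (pfst q)))) (pfst (pfst q))" for q
  have "decidable D"
    unfolding D_def
    by (intro decidable_le total_recursive_intros total_recursive_add total_recursive_pow2)
  moreover have "sigma1 E"
  proof -
    have "sigma1 (\<lambda>q. eval r (pfst (prod_encode (prod_encode (psnd q, pfst (psnd (pfst q))), pfst (pfst q))))
        (psnd (prod_encode (prod_encode (psnd q, pfst (psnd (pfst q))), pfst (pfst q)))))"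
      by (intro sigma1_comp[OF sigma1_eval_graph] total_recursive_intros)
    then show ?thesis unfolding E_def by simp
  qed
  ultimately have "sigma1 (\<lambda>p. \<exists>zc. D (prod_encode (p, zc)) \<and> E (prod_encode (p, zc)))"
    by (intro sigma1_ex sigma1_conj_decidable)
  then show ?thesis by (simp add: D_def E_def C_le_eval)
qed

definition B :: "str \<Rightarrow> str \<Rightarrow> nat" where
  "B x y = min (C x []) (2 * C x y)"

lemma upper_semicomputable_B: "upper_semicomputable B"
proof (rule upper_semicomputableI)
  define Cle where "Cle = (\<lambda>p. C (dec (pfst p)) (dec (pfst (psnd p))) \<le> psnd (psnd p))"
  have "sigma1 (\<lambda>p. Cle (prod_encode (pfst p, prod_encode (0, psnd (psnd p)))) \<or>
      Cle (prod_encode (pfst p, prod_encode (pfst (psnd p), psnd (psnd p) div 2))))"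
    unfolding Cle_def
    by (intro sigma1_disj sigma1_comp[OF sigma1_C_le] total_recursive_intros total_recursive_div2)
  moreover have "B x y \<le> k \<longleftrightarrow> C x [] \<le> k \<or> C x y \<le> k div 2" for x y k
    unfolding B_def by auto
  ultimately show "sigma1 (\<lambda>p. B (dec (pfst p)) (dec (pfst (psnd p))) \<le> psnd (psnd p))"
    unfolding Cle_def by simp
qed

lemma B_le_length: obtains c where "\<And>x y. B x y \<le> length x + c"
proof -
  obtain c where "\<And>x y. C x y \<le> length x + c" using C_le_length by blast
  then have "B x y \<le> length x + c" for x y unfolding B_def by (metis min.coboundedI1)
  then show ?thesis by (rule that)
qed

lemma B_le_subset: obtains c where "\<And>y n. {x. B x y \<le> n} \<subseteq> {x. C x y \<le> n + c}"
proof -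
  obtain c where c: "\<And>x y. C x y \<le> C x [] + c" using C_le_C_empty by blast
  have "{x. B x y \<le> n} \<subseteq> {x. C x y \<le> n + c}" for y n
  proof
    fix x assume "x \<in> {x. B x y \<le> n}"
    then have "C x [] \<le> n \<or> 2 * C x y \<le> n" unfolding B_def by (simp add: min_le_iff_disj)
    then show "x \<in> {x. C x y \<le> n + c}" using c[of x y] by auto
  qed
  then show ?thesis by (rule that)
qed

lemma finite_B_le: "finite {x. B x y \<le> n}"
  using B_le_subset finite_C_le by (metis finite_subset)

lemma card_B_le: obtains d where "\<And>y n. card {x. B x y \<le> n} \<le> d * 2 ^ n"
proof -
  obtain c where sub: "\<And>y n. {x. B x y \<le> n} \<subseteq> {x. C x y \<le> n + c}" using B_le_subset by blast
  have "card {x. B x y \<le> n} \<le> 2 ^ (c + 1) * 2 ^ n" for y n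
  proof -
    have "card {x. B x y \<le> n} \<le> card {x. C x y \<le> n + c}"
      by (rule card_mono[OF finite_C_le sub])
    also have "\<dots> \<le> 2 ^ (n + c + 1)" by (rule card_C_le)
    also have "\<dots> = 2 ^ (c + 1) * 2 ^ n" by (simp add: power_add)
    finally show ?thesis .
  qed
  then show ?thesis by (rule that)
qed

lemma B_map_le:
  assumes "partial_computable f"
  obtains c where "\<And>x y z. f x = Some z \<Longrightarrow> B z y \<le> B x y + c"
proof -
  obtain c where c: "\<And>x y z. f x = Some z \<Longrightarrow> C z y \<le> C x y + c" using C_map_le[OF assms] by blast
  have "B z y \<le> B x y + 2 * c" if "f x = Some z" for x y z
    using c[OF that, of y] c[OF that, of "[]"] unfolding B_def by linarith
  then show ?thesis by (rule that)
qed

lemma B_self_le: obtains e where "\<And>x. B x x \<le> e"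
proof -
  obtain c where "\<And>x. C x x \<le> c" using C_self_le by blast
  then have "B x x \<le> 2 * c" for x unfolding B_def by (metis min.coboundedI2 mult_le_mono2)
  then show ?thesis by (rule that)
qed

lemma C_add_lt_B: obtains x y where "C x y + m < B x y"
proof -
  obtain c where c: "\<And>x y b. C x y \<le> C x (b # y) + c" using C_le_C_Cons by blast
  obtain e where e: "\<And>x. C x x \<le> e" using C_self_le by blast
  define N where "N = m + 1 + e"
  obtain x where x: "N + c + m + 1 \<le> C x []" using exists_incompressible by blast
  define g where "g i = C x (drop i x)" for i
  have "g 0 < N" unfolding g_def N_def using e[of x] by simp
  moreover have "N \<le> g (length x)" unfolding g_def using x by simp
  moreover have "g (Suc i) \<le> g i + c" if "i < length x" for i
    unfolding g_def using c Cons_nth_drop_Suc[OF that] by metis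
  ultimately obtain i where "N \<le> g i" "g i \<le> N + c"
    using discrete_intermediate_value[of g N "length x" c] by blast
  then have "C x (drop i x) + m < B x (drop i x)"
    using x unfolding B_def g_def N_def by simp
  then show ?thesis by (rule that)
qed

end

theorem theorem6:
  fixes U :: "str \<Rightarrow> str option"
  assumes "optimal_machine U"
  shows "\<exists>B :: str \<Rightarrow> str \<Rightarrow> nat.
     upper_semicomputable B
   \<and> (\<exists>c::nat. \<forall>x y. B x y \<le> length x + c)
   \<and> (\<exists>d::nat. \<forall>y n. finite {x. B x y \<le> n} \<and> card {x. B x y \<le> n} \<le> d * 2 ^ n)
   \<and> (\<forall>f. partial_computable f \<longrightarrow>
         (\<exists>cf::nat. \<forall>y x z. f x = Some z \<longrightarrow> B z y \<le> B x y + cf))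
   \<and> (\<exists>e::nat. \<forall>x. B x x \<le> e)
   \<and> (\<forall>m::nat. \<exists>x y. enat (B x y) + enat m < Ccond U x y
                     \<or> Ccond U x y + enat m < enat (B x y))"
proof -
  interpret optimal_decompressor U using assms by unfold_locales
  obtain c where c: "\<And>x y. B x y \<le> length x + c" using B_le_length by blast
  obtain d where d: "\<And>y n. card {x. B x y \<le> n} \<le> d * 2 ^ n" using card_B_le by blast
  obtain e where e: "\<And>x. B x x \<le> e" using B_self_le by blast
  have map: "\<exists>cf. \<forall>y x z. f x = Some z \<longrightarrow> B z y \<le> B x y + cf" if f: "partial_computable f" for f
  proof -
    obtain cf where "\<And>x y z. f x = Some z \<Longrightarrow> B z y \<le> B x y + cf" using B_map_le[OF f] by blast
    then show ?thesis by blast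
  qed
  have gap: "\<exists>x y. Ccond U x y + enat m < enat (B x y)" for m
  proof -
    obtain x y where "C x y + m < B x y" using C_add_lt_B by blast
    then show ?thesis by (intro exI[of _ x] exI[of _ y]) (simp add: Ccond_eq_C)
  qed
  show ?thesis
    using upper_semicomputable_B c finite_B_le d map e gap by (intro exI[of _ B] conjI) blast+
qed

end
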